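(* Let $(W,S)$ be a Coxeter system with $S$ finite and let $D_1,\dots,D_m$ be non-empty subsets of $W$ such that the multiplication map $D_1\times\cdots\times D_m\to W$ is a bijection and $D_1(u)\cdots D_m(u)=W(u)$. Then for every representation $\rho$ of the Hecke algebra $H_q(W,S)$, $$W(\rho,u)=D_1(\rho,u)\cdots D_m(\rho,u)\quad\text{in }\mathrm{End}(V_\rho)[[u]].$$
   Context: $\ell$ is the length function of $(W,S)$. For $D\subseteq W$, $D(u)=\sum_{w\in D}u^{\ell(w)}$. The Hecke algebra $H_q(W,S)$ (over a field $k$, with parameter $q$) is the associative algebra with basis $\{e_w\}_{w\in W}$ whose multiplication is characterized by $(e_s+1)(e_s-q)=0$ for $s\in S$ and $e_we_v=e_{wv}$ whenever $\ell(wv)=\ell(w)+\ell(v)$. For a representation $(\rho,V_\rho)$ of $H_q(W,S)$ and $D\subseteq W$, the twisted Poincaré series is $D(\rho,u)=\sum_{w\in D}\rho(e_w)u^{\ell(w)}\in\mathrm{End}(V_\rho)[[u]]$. *)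

theory Defs
  imports Main "HOL-Algebra.Multiplicative_Group" "HOL-Algebra.Generated_Groups"
    "HOL-Computational_Algebra.Formal_Power_Series"
begin

definition word_prod :: "('a, 'b) monoid_scheme \<Rightarrow> 'a list \<Rightarrow> 'a" where
  "word_prod G ws = foldr (\<lambda>x y. x \<otimes>\<^bsub>G\<^esub> y) ws \<one>\<^bsub>G\<^esub>"

fun alt_word :: "'a \<Rightarrow> 'a \<Rightarrow> nat \<Rightarrow> 'a list" where
  "alt_word s t 0 = []"
| "alt_word s t (Suc n) = s # alt_word t s n"

text \<open>Defining relations of the Coxeter presentation (as a monoid presentation):
  s s = 1 and the braid relations (s t s ...)_m = (t s t ...)_m with m = m(s,t) the
  order of s t (only when finite).\<close>
definition coxeter_relators :: "('a, 'b) monoid_scheme \<Rightarrow> 'a set \<Rightarrow> ('a list \<times> 'a list) set" where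
  "coxeter_relators G S =
     {([s, s], []) | s. s \<in> S} \<union>
     {(alt_word s t (group.ord G (s \<otimes>\<^bsub>G\<^esub> t)), alt_word t s (group.ord G (s \<otimes>\<^bsub>G\<^esub> t))) | s t.
         s \<in> S \<and> t \<in> S \<and> s \<noteq> t \<and> group.ord G (s \<otimes>\<^bsub>G\<^esub> t) \<noteq> 0}"

definition coxeter_step :: "('a, 'b) monoid_scheme \<Rightarrow> 'a set \<Rightarrow> ('a list \<times> 'a list) set" where
  "coxeter_step G S =
     {(u @ l @ v, u @ r @ v) | u v l r.
        (l, r) \<in> coxeter_relators G S \<or> (r, l) \<in> coxeter_relators G S}"

text \<open>(W,S) is a Coxeter system: W is a group generated by the involutions S, with
  presentation  < S | s^2 = 1, (st)^{m(s,t)} = 1 >  where m(s,t) is the order of st.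
  The presentation condition says: any two words over S with the same product in W are
  equal in the presented monoid (= group), i.e. related by the congruence generated by
  the defining relations.\<close>
definition coxeter_system :: "('a, 'b) monoid_scheme \<Rightarrow> 'a set \<Rightarrow> bool" where
  "coxeter_system G S \<longleftrightarrow>
     group G \<and> S \<subseteq> carrier G \<and> \<one>\<^bsub>G\<^esub> \<notin> S \<and>
     (\<forall>s\<in>S. s \<otimes>\<^bsub>G\<^esub> s = \<one>\<^bsub>G\<^esub>) \<and>
     generate G S = carrier G \<and>
     (\<forall>ws vs. set ws \<subseteq> S \<longrightarrow> set vs \<subseteq> S \<longrightarrow> word_prod G ws = word_prod G vs \<longrightarrow>
        (ws, vs) \<in> (coxeter_step G S)\<^sup>*)"

definition coxeter_length :: "('a, 'b) monoid_scheme \<Rightarrow> 'a set \<Rightarrow> 'a \<Rightarrow> nat" where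
  "coxeter_length G S w = (LEAST n. \<exists>ws. set ws \<subseteq> S \<and> length ws = n \<and> word_prod G ws = w)"

definition poincare_series :: "('a, 'b) monoid_scheme \<Rightarrow> 'a set \<Rightarrow> 'a set \<Rightarrow> int fps" where
  "poincare_series G S D = Abs_fps (\<lambda>n. int (card {w \<in> D. coxeter_length G S w = n}))"

text \<open>A representation of H_q(W,S) on the k-vector space V (scalar multiplication scale),
  given by rho w = rho(e_w).  Since H_q has basis (e_w) and its multiplication is
  determined by e_1 = 1, (e_s+1)(e_s-q)=0 and e_w e_v = e_{wv} for l(wv)=l(w)+l(v),
  a unital algebra homomorphism H_q \<rightarrow> End(V) is the same as such a family.\<close>
definition hecke_rep ::
  "('a, 'b) monoid_scheme \<Rightarrow> 'a set \<Rightarrow> ('k::field \<Rightarrow> 'v::ab_group_add \<Rightarrow> 'v) \<Rightarrow> 'k \<Rightarrow> ('a \<Rightarrow> 'v \<Rightarrow> 'v) \<Rightarrow> bool" where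
  "hecke_rep G S scale q \<rho> \<longleftrightarrow>
     vector_space scale \<and>
     (\<forall>w\<in>carrier G. Vector_Spaces.linear scale scale (\<rho> w)) \<and>
     \<rho> \<one>\<^bsub>G\<^esub> = id \<and>
     (\<forall>s\<in>S. \<forall>x. \<rho> s (\<rho> s x - scale q x) + (\<rho> s x - scale q x) = 0) \<and>
     (\<forall>w\<in>carrier G. \<forall>v\<in>carrier G.
        coxeter_length G S (w \<otimes>\<^bsub>G\<^esub> v) = coxeter_length G S w + coxeter_length G S v \<longrightarrow>
        \<rho> (w \<otimes>\<^bsub>G\<^esub> v) = \<rho> w \<circ> \<rho> v)"

text \<open>Formal power series with coefficients in End(V): the coefficient of u^n.
  Multiplication is the Cauchy product with composition of endomorphisms.\<close>
type_synonym 'v end_series = "nat \<Rightarrow> 'v \<Rightarrow> 'v"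

definition end_series_one :: "'v::ab_group_add end_series" where
  "end_series_one = (\<lambda>n. if n = 0 then id else (\<lambda>x. 0))"

definition end_series_mult :: "'v::ab_group_add end_series \<Rightarrow> 'v end_series \<Rightarrow> 'v end_series" where
  "end_series_mult f g = (\<lambda>n x. \<Sum>i\<le>n. f i (g (n - i) x))"

definition twisted_poincare ::
  "('a, 'b) monoid_scheme \<Rightarrow> 'a set \<Rightarrow> ('a \<Rightarrow> 'v \<Rightarrow> 'v) \<Rightarrow> 'a set \<Rightarrow> 'v::ab_group_add end_series" where
  "twisted_poincare G S \<rho> D = (\<lambda>n x. \<Sum>w\<in>{w \<in> D. coxeter_length G S w = n}. \<rho> w x)"

end

theory Submission
  imports Defs
begin

text \<open>Expanding the product \<open>D\<^sub>1(u)\<cdots>D\<^sub>m(u)\<close> shows that its coefficient of \<open>u\<^sup>n\<close> counts the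
  tuples \<open>(w\<^sub>1,\<dots>,w\<^sub>m) \<in> D\<^sub>1\<times>\<cdots>\<times>D\<^sub>m\<close> with \<open>\<ell>(w\<^sub>1)+\<cdots>+\<ell>(w\<^sub>m) = n\<close>, while \<open>W(u)\<close> counts,
  through the bijection, the tuples with \<open>\<ell>(w\<^sub>1\<cdots>w\<^sub>m) = n\<close>. Since always
  \<open>\<ell>(w\<^sub>1\<cdots>w\<^sub>m) \<le> \<ell>(w\<^sub>1)+\<cdots>+\<ell>(w\<^sub>m)\<close>, equality of all these counts forces the length to be
  additive on every tuple. Additivity gives \<open>e\<^sub>w\<^sub>1\<cdots>e\<^sub>w\<^sub>m = e\<^bsub>w\<^sub>1\<cdots>w\<^sub>m\<^esub>\<close> in the Hecke algebra, and
  expanding \<open>D\<^sub>1(\<rho>,u)\<cdots>D\<^sub>m(\<rho>,u)\<close> the same way yields \<open>W(\<rho>,u)\<close>.\<close>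

definition graded_series :: "('a \<Rightarrow> nat) \<Rightarrow> ('a \<Rightarrow> 'v \<Rightarrow> 'v) \<Rightarrow> 'a set \<Rightarrow> 'v::ab_group_add end_series"
  where "graded_series L h D = (\<lambda>n x. \<Sum>w\<in>{w\<in>D. L w = n}. h w x)"

lemma twisted_poincare_eq_graded_series:
  "twisted_poincare G S \<rho> = graded_series (coxeter_length G S) \<rho>"
  by (simp add: fun_eq_iff twisted_poincare_def graded_series_def)

lemma set_listset_subset: "t \<in> listset Ds \<Longrightarrow> set t \<subseteq> \<Union>(set Ds)"
  by (induction Ds arbitrary: t) (force simp: set_Cons_def)+

lemma finite_listset_weight_le:
  fixes L :: "'a \<Rightarrow> nat"
  assumes "\<And>D n. D \<in> set Ds \<Longrightarrow> finite {w\<in>D. L w \<le> n}"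
  shows "finite {t\<in>listset Ds. sum_list (map L t) \<le> n}"
  using assms
proof (induction Ds arbitrary: n)
  case (Cons D Ds)
  have "{t\<in>listset (D#Ds). sum_list (map L t) \<le> n} \<subseteq>
        (\<lambda>(w,t). w#t) ` ({w\<in>D. L w \<le> n} \<times> {t\<in>listset Ds. sum_list (map L t) \<le> n})"
    by (force simp: set_Cons_def)
  moreover have "finite ({w\<in>D. L w \<le> n} \<times> {t\<in>listset Ds. sum_list (map L t) \<le> n})"
    using Cons by simp
  ultimately show ?case
    by (meson finite_imageI finite_subset)
qed simp

lemma bij_betw_Cons_listset_weight:
  fixes L :: "'a \<Rightarrow> nat"
  shows "bij_betw (\<lambda>(w,t). w#t)
    (SIGMA w:{w\<in>D. L w \<le> n}. {t\<in>listset Ds. sum_list (map L t) = n - L w})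
    {t\<in>listset (D#Ds). sum_list (map L t) = n}"
proof (rule bij_betwI')
  fix z assume "z \<in> {t\<in>listset (D#Ds). sum_list (map L t) = n}"
  then obtain w t where "z = w#t" "w \<in> D" "t \<in> listset Ds" "L w + sum_list (map L t) = n"
    by (auto simp: set_Cons_def)
  then show "\<exists>p\<in>SIGMA w:{w\<in>D. L w \<le> n}. {t\<in>listset Ds. sum_list (map L t) = n - L w}.
               z = (case p of (w, t) \<Rightarrow> w#t)"
    by (intro bexI[of _ "(w,t)"]) simp_all
qed (auto simp: set_Cons_def)

lemma foldr_end_series_mult_graded_series:
  fixes h :: "'a \<Rightarrow> 'v::ab_group_add \<Rightarrow> 'v"
  assumes additive: "\<And>D w x y. D \<in> set Ds \<Longrightarrow> w \<in> D \<Longrightarrow> h w (x + y) = h w x + h w y"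
    and finite: "\<And>D n. D \<in> set Ds \<Longrightarrow> finite {w\<in>D. L w \<le> n}"
  shows "foldr end_series_mult (map (graded_series L h) Ds) end_series_one n x
       = (\<Sum>t\<in>{t\<in>listset Ds. sum_list (map L t) = n}. foldr h t x)"
  using assms
proof (induction Ds arbitrary: n x)
  case Nil
  have "{t\<in>listset []. sum_list (map L t) = n} = (if n = 0 then {[]} else {})"
    by auto
  then show ?case
    by (simp add: end_series_one_def)
next
  case (Cons D Ds)
  define T where "T k = {t\<in>listset Ds. sum_list (map L t) = k}" for k
  define B where "B = {w\<in>D. L w \<le> n}"
  have fin_T: "finite (T k)" for k
    using finite_listset_weight_le[of Ds L k] Cons.prems(2)
    by (auto simp: T_def intro: finite_subset[rotated])
  have fin_B: "finite B"
    using Cons.prems(2) by (simp add: B_def)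
  have "h w (x + y) = h w x + h w y" if "D' \<in> set Ds" "w \<in> D'" for D' w x y
    by (rule Cons.prems(1)) (use that in simp_all)
  then have IH: "foldr end_series_mult (map (graded_series L h) Ds) end_series_one k y
      = (\<Sum>t\<in>T k. foldr h t y)" for k y
    using Cons.IH Cons.prems(2) by (simp add: T_def)
  have h_sum: "h w (\<Sum>t\<in>T k. foldr h t x) = (\<Sum>t\<in>T k. h w (foldr h t x))" if "w \<in> D" for w k
    using sum_comp_morphism[of "h w" "\<lambda>t. foldr h t x" "T k"] Cons.prems(1)[OF _ that]
    by (simp add: o_def) (metis add_cancel_right_right)
  have "foldr end_series_mult (map (graded_series L h) (D#Ds)) end_series_one n x
      = (\<Sum>i\<le>n. \<Sum>w\<in>{w\<in>D. L w = i}. h w (\<Sum>t\<in>T (n - i). foldr h t x))"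
    by (simp add: end_series_mult_def graded_series_def IH)
  also have "\<dots> = (\<Sum>i\<le>n. \<Sum>w\<in>{w\<in>B. L w = i}. \<Sum>t\<in>T (n - L w). h w (foldr h t x))"
  proof (rule sum.cong[OF refl], rule sum.cong)
    fix i w assume "w \<in> {w\<in>B. L w = i}"
    then show "h w (\<Sum>t\<in>T (n - i). foldr h t x) = (\<Sum>t\<in>T (n - L w). h w (foldr h t x))"
      by (simp add: B_def h_sum)
  qed (auto simp: B_def)
  also have "\<dots> = (\<Sum>w\<in>B. \<Sum>t\<in>T (n - L w). h w (foldr h t x))"
    by (rule sum.group[OF fin_B]) (auto simp: B_def)
  also have "\<dots> = (\<Sum>(w,t)\<in>(SIGMA w:B. T (n - L w)). foldr h (w#t) x)"
    by (simp add: sum.Sigma fin_B fin_T)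
  also have "\<dots> = (\<Sum>t\<in>{t\<in>listset (D#Ds). sum_list (map L t) = n}. foldr h t x)"
    using sum.reindex_bij_betw[OF bij_betw_Cons_listset_weight[of D L n Ds], of "\<lambda>t. foldr h t x"]
    by (simp add: B_def T_def case_prod_unfold)
  finally show ?case .
qed

lemma fps_nth_prod_list_end_series:
  fixes Fs :: "'c::comm_ring_1 fps list"
  shows "fps_nth (prod_list Fs) n * x
       = foldr end_series_mult (map (\<lambda>F n x. fps_nth F n * x) Fs) end_series_one n x"
proof (induction Fs arbitrary: n x)
  case (Cons F Fs)
  have "fps_nth (prod_list (F#Fs)) n * x
      = (\<Sum>i\<le>n. fps_nth F i * (fps_nth (prod_list Fs) (n - i) * x))"
    by (simp add: fps_mult_nth sum_distrib_right atLeast0AtMost mult.assoc)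
  then show ?case
    by (simp add: end_series_mult_def Cons.IH)
qed (simp add: end_series_one_def)

lemma fps_nth_prod_list_graded_count:
  fixes L :: "'a \<Rightarrow> nat"
  assumes "\<And>D n. D \<in> set Ds \<Longrightarrow> finite {w\<in>D. L w \<le> n}"
  shows "fps_nth (prod_list (map (\<lambda>D. Abs_fps (\<lambda>n. int (card {w\<in>D. L w = n}))) Ds)) n
       = int (card {t\<in>listset Ds. sum_list (map L t) = n})"
proof -
  have foldr_weight_one: "foldr (\<lambda>w (x::int). x) t 1 = 1" for t :: "'a list"
    by (induction t) simp_all
  have "graded_series L (\<lambda>w x. x) = (\<lambda>D n x. int (card {w\<in>D. L w = n}) * x)"
    by (simp add: fun_eq_iff graded_series_def)
  then have "fps_nth (prod_list (map (\<lambda>D. Abs_fps (\<lambda>n. int (card {w\<in>D. L w = n}))) Ds)) n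
      = foldr end_series_mult (map (graded_series L (\<lambda>w x. x)) Ds) end_series_one n 1"
    using fps_nth_prod_list_end_series[of "map (\<lambda>D. Abs_fps (\<lambda>n. int (card {w\<in>D. L w = n}))) Ds" n 1]
    by (simp add: o_def)
  also have "\<dots> = (\<Sum>t\<in>{t\<in>listset Ds. sum_list (map L t) = n}. foldr (\<lambda>w x. x) t (1::int))"
    by (rule foldr_end_series_mult_graded_series) (simp_all add: assms)
  also have "\<dots> = int (card {t\<in>listset Ds. sum_list (map L t) = n})"
    using foldr_weight_one by simp
  finally show ?thesis .
qed

text \<open>By induction on the degree, the \<open>f\<close>-level \<open>n\<close> lies inside the \<open>g\<close>-level \<open>n\<close> (an element
  with \<open>g x < n\<close> would already lie in a lower level), and the two have the same cardinality.\<close>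

lemma grading_eq_if_le_and_level_card_eq:
  fixes f g :: "'a \<Rightarrow> nat"
  assumes le: "\<And>x. x \<in> A \<Longrightarrow> g x \<le> f x"
    and finite: "\<And>n. finite {x\<in>A. g x = n}"
    and card: "\<And>n. card {x\<in>A. f x = n} = card {x\<in>A. g x = n}"
    and "x \<in> A"
  shows "g x = f x"
proof -
  have levels: "{x\<in>A. f x = n} = {x\<in>A. g x = n}" for n
  proof (induction n rule: less_induct)
    case (less n)
    have sub: "{x\<in>A. f x = n} \<subseteq> {x\<in>A. g x = n}"
    proof
      fix x assume x: "x \<in> {x\<in>A. f x = n}"
      have "\<not> g x < n"
      proof
        assume "g x < n"
        then have "{y\<in>A. f y = g x} = {y\<in>A. g y = g x}"
          by (rule less.IH)
        then have "f x = g x"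
          using x by (metis (mono_tags, lifting) mem_Collect_eq)
        with x \<open>g x < n\<close> show False
          by simp
      qed
      with le[of x] x show "x \<in> {x\<in>A. g x = n}"
        by simp
    qed
    show ?case
      by (rule card_subset_eq[OF finite sub card])
  qed
  show ?thesis
    using levels[of "f x"] \<open>x \<in> A\<close> by (metis (mono_tags, lifting) mem_Collect_eq)
qed

lemma word_prod_Nil [simp]: "word_prod G [] = \<one>\<^bsub>G\<^esub>"
  by (simp add: word_prod_def)

lemma word_prod_Cons [simp]: "word_prod G (x#xs) = x \<otimes>\<^bsub>G\<^esub> word_prod G xs"
  by (simp add: word_prod_def)

lemma (in monoid) word_prod_closed: "set ws \<subseteq> carrier G \<Longrightarrow> word_prod G ws \<in> carrier G"
  by (induction ws) auto

lemma (in monoid) word_prod_append: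
  "set ws \<subseteq> carrier G \<Longrightarrow> set vs \<subseteq> carrier G \<Longrightarrow>
    word_prod G (ws @ vs) = word_prod G ws \<otimes> word_prod G vs"
  by (induction ws) (auto simp: m_assoc word_prod_closed)

lemma hecke_rep_additive:
  assumes "hecke_rep G S scale q \<rho>" and "w \<in> carrier G"
  shows "\<rho> w (x + y) = \<rho> w x + \<rho> w y"
proof -
  have "Vector_Spaces.linear scale scale (\<rho> w)"
    using assms unfolding hecke_rep_def by blast
  then show ?thesis
    by (simp add: Vector_Spaces.linear_iff)
qed

context
  fixes G :: "('a, 'b) monoid_scheme" and S :: "'a set"
  assumes cox: "coxeter_system G S"
begin

private abbreviation "len \<equiv> coxeter_length G S"

private lemma group: "group G"
  using cox by (simp add: coxeter_system_def)

private lemma gens_subset: "S \<subseteq> carrier G"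
  using cox by (simp add: coxeter_system_def)

interpretation group G
  by (fact group)

lemma coxeter_word_exists:
  assumes "w \<in> carrier G"
  shows "\<exists>ws. set ws \<subseteq> S \<and> word_prod G ws = w"
proof -
  have "w \<in> generate G S"
    using cox assms by (simp add: coxeter_system_def)
  then show ?thesis
  proof (induction rule: generate.induct)
    case one
    show ?case
      by (auto intro!: exI[of _ "[]"])
  next
    case (incl s)
    then show ?case
      using gens_subset by (auto intro!: exI[of _ "[s]"])
  next
    case (inv s)
    then have "inv\<^bsub>G\<^esub> s = s"
      using cox gens_subset by (auto simp: coxeter_system_def intro: inv_equality)
    with inv show ?case
      using gens_subset by (auto intro!: exI[of _ "[s]"])
  next
    case (eng h1 h2)
    then obtain ws vs where "set ws \<subseteq> S" "word_prod G ws = h1" "set vs \<subseteq> S" "word_prod G vs = h2"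
      by blast
    then show ?case
      using gens_subset by (auto intro!: exI[of _ "ws @ vs"] simp: word_prod_append)
  qed
qed

lemma coxeter_reduced_word_exists:
  assumes "w \<in> carrier G"
  shows "\<exists>ws. set ws \<subseteq> S \<and> length ws = len w \<and> word_prod G ws = w"
  unfolding coxeter_length_def
  by (rule LeastI_ex) (use coxeter_word_exists[OF assms] in blast)

lemma coxeter_length_le_length:
  "set ws \<subseteq> S \<Longrightarrow> len (word_prod G ws) \<le> length ws"
  unfolding coxeter_length_def by (rule Least_le) blast

lemma coxeter_length_mult_le:
  assumes "w \<in> carrier G" "v \<in> carrier G"
  shows "len (w \<otimes>\<^bsub>G\<^esub> v) \<le> len w + len v"
proof -
  obtain ws vs where "set ws \<subseteq> S" "length ws = len w" "word_prod G ws = w"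
    "set vs \<subseteq> S" "length vs = len v" "word_prod G vs = v"
    using coxeter_reduced_word_exists assms by meson
  then show ?thesis
    using coxeter_length_le_length[of "ws @ vs"] gens_subset by (auto simp: word_prod_append)
qed

lemma coxeter_length_word_prod_le:
  "set t \<subseteq> carrier G \<Longrightarrow> len (word_prod G t) \<le> sum_list (map len t)"
proof (induction t)
  case Nil
  show ?case
    using coxeter_length_le_length[of "[]"] by simp
next
  case (Cons w t)
  then have "len (word_prod G (w#t)) \<le> len w + len (word_prod G t)"
    using coxeter_length_mult_le word_prod_closed by simp
  with Cons show ?case
    by simp
qed

lemma finite_coxeter_length_le:
  assumes "finite S" and "D \<subseteq> carrier G"
  shows "finite {w\<in>D. len w \<le> n}"
proof -
  have "{w\<in>D. len w \<le> n} \<subseteq> word_prod G ` {ws. set ws \<subseteq> S \<and> length ws \<le> n}"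
  proof
    fix w assume w: "w \<in> {w\<in>D. len w \<le> n}"
    then obtain ws where "set ws \<subseteq> S" "length ws = len w" "word_prod G ws = w"
      using coxeter_reduced_word_exists assms(2) by blast
    with w show "w \<in> word_prod G ` {ws. set ws \<subseteq> S \<and> length ws \<le> n}"
      by auto
  qed
  then show ?thesis
    using finite_lists_length_le[OF assms(1)] by (meson finite_imageI finite_subset)
qed

text \<open>Since the length is subadditive, additivity on the whole tuple forces additivity at
  each step, so the Hecke relation \<open>e\<^sub>we\<^sub>v = e\<^bsub>wv\<^esub>\<close> applies repeatedly.\<close>

lemma hecke_rep_word_prod:
  assumes rep: "hecke_rep G S scale q \<rho>" and "set t \<subseteq> carrier G"
    and "len (word_prod G t) = sum_list (map len t)"
  shows "\<rho> (word_prod G t) = foldr \<rho> t"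
  using assms(2,3)
proof (induction t)
  case Nil
  then show ?case
    using rep by (simp add: hecke_rep_def)
next
  case (Cons w t)
  have w: "w \<in> carrier G" and t: "set t \<subseteq> carrier G"
    using Cons.prems(1) by simp_all
  have "len (word_prod G t) \<le> sum_list (map len t)"
    using t by (rule coxeter_length_word_prod_le)
  moreover have "len (w \<otimes>\<^bsub>G\<^esub> word_prod G t) \<le> len w + len (word_prod G t)"
    using w t by (simp add: coxeter_length_mult_le word_prod_closed)
  ultimately have additive_tail: "len (word_prod G t) = sum_list (map len t)"
    and additive_head: "len (w \<otimes>\<^bsub>G\<^esub> word_prod G t) = len w + len (word_prod G t)"
    using Cons.prems(2) by simp_all
  have "\<rho> (w \<otimes>\<^bsub>G\<^esub> word_prod G t) = \<rho> w \<circ> \<rho> (word_prod G t)"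
    using rep w word_prod_closed[OF t] additive_head unfolding hecke_rep_def by blast
  then show ?case
    using Cons.IH[OF t additive_tail] by simp
qed

lemma coxeter_length_additive_on_factorization:
  assumes "finite S"
    and subset: "\<And>D. D \<in> set Ds \<Longrightarrow> D \<subseteq> carrier G"
    and bij: "bij_betw (word_prod G) (listset Ds) (carrier G)"
    and poincare: "prod_list (map (poincare_series G S) Ds) = poincare_series G S (carrier G)"
    and "t \<in> listset Ds"
  shows "len (word_prod G t) = sum_list (map len t)"
proof (rule grading_eq_if_le_and_level_card_eq[where A = "listset Ds"])
  have carrier: "set t \<subseteq> carrier G" if "t \<in> listset Ds" for t
    using set_listset_subset[OF that] subset by blast
  show "len (word_prod G t) \<le> sum_list (map len t)" if "t \<in> listset Ds" for t
    using coxeter_length_word_prod_le[OF carrier[OF that]] .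
  have level: "bij_betw (word_prod G) {t\<in>listset Ds. len (word_prod G t) = n} {w\<in>carrier G. len w = n}"
    for n using bij by (auto simp: bij_betw_def inj_on_def)
  show "finite {t\<in>listset Ds. len (word_prod G t) = n}" for n
  proof -
    have "finite {w\<in>carrier G. len w = n}"
      by (rule finite_subset[OF _ finite_coxeter_length_le[OF \<open>finite S\<close> subset_refl, of n]]) auto
    then show ?thesis
      using bij_betw_finite[OF level] by blast
  qed
  have fin_D: "finite {w\<in>D. len w \<le> n}" if "D \<in> set Ds" for D n
    using \<open>finite S\<close> subset[OF that] by (rule finite_coxeter_length_le)
  have "int (card {t\<in>listset Ds. sum_list (map len t) = n}) = fps_nth (poincare_series G S (carrier G)) n"
    for n using fps_nth_prod_list_graded_count[OF fin_D, where n = n]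
    unfolding poincare[symmetric] by (simp add: poincare_series_def[abs_def])
  then show "card {t\<in>listset Ds. sum_list (map len t) = n}
           = card {t\<in>listset Ds. len (word_prod G t) = n}" for n
    using bij_betw_same_card[OF level] by (simp add: poincare_series_def)
qed fact

lemma twisted_poincare_carrier_eq_sum_factorizations:
  assumes "finite S"
    and subset: "\<And>D. D \<in> set Ds \<Longrightarrow> D \<subseteq> carrier G"
    and bij: "bij_betw (word_prod G) (listset Ds) (carrier G)"
    and "prod_list (map (poincare_series G S) Ds) = poincare_series G S (carrier G)"
    and rep: "hecke_rep G S scale q \<rho>"
  shows "twisted_poincare G S \<rho> (carrier G) n x
       = (\<Sum>t\<in>{t\<in>listset Ds. sum_list (map len t) = n}. foldr \<rho> t x)"
proof -
  have additive: "len (word_prod G t) = sum_list (map len t)" if "t \<in> listset Ds" for t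
    using assms(1-4) that by (rule coxeter_length_additive_on_factorization)
  have level: "bij_betw (word_prod G) {t\<in>listset Ds. sum_list (map len t) = n} {w\<in>carrier G. len w = n}"
  proof -
    have "{t\<in>listset Ds. sum_list (map len t) = n} = {t\<in>listset Ds. len (word_prod G t) = n}"
      using additive by auto
    moreover have "bij_betw (word_prod G) {t\<in>listset Ds. len (word_prod G t) = n} {w\<in>carrier G. len w = n}"
      using bij by (auto simp: bij_betw_def inj_on_def)
    ultimately show ?thesis
      by simp
  qed
  have word: "\<rho> (word_prod G t) = foldr \<rho> t" if "t \<in> listset Ds" for t
  proof -
    have "set t \<subseteq> carrier G"
      using set_listset_subset[OF that] subset by blast
    with rep show ?thesis
      using additive[OF that] by (rule hecke_rep_word_prod)
  qed
  have "twisted_poincare G S \<rho> (carrier G) n x = (\<Sum>w\<in>{w\<in>carrier G. len w = n}. \<rho> w x)"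
    by (simp add: twisted_poincare_def)
  also have "\<dots> = (\<Sum>t\<in>{t\<in>listset Ds. sum_list (map len t) = n}. \<rho> (word_prod G t) x)"
    by (rule sum.reindex_bij_betw[OF level, symmetric])
  also have "\<dots> = (\<Sum>t\<in>{t\<in>listset Ds. sum_list (map len t) = n}. foldr \<rho> t x)"
    by (rule sum.cong) (simp_all add: word)
  finally show ?thesis .
qed

end

theorem mainTheorem5:
  fixes G :: "('a, 'b) monoid_scheme" and S :: "'a set"
    and Ds :: "'a set list"
    and scale :: "'k::field \<Rightarrow> 'v::ab_group_add \<Rightarrow> 'v" and q :: 'k
    and \<rho> :: "'a \<Rightarrow> 'v \<Rightarrow> 'v"
  assumes "coxeter_system G S"
    and "finite S"
    and "\<forall>D\<in>set Ds. D \<subseteq> carrier G \<and> D \<noteq> {}"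
    and "bij_betw (word_prod G) (listset Ds) (carrier G)"
    and "prod_list (map (poincare_series G S) Ds) = poincare_series G S (carrier G)"
    and "hecke_rep G S scale q \<rho>"
  shows "twisted_poincare G S \<rho> (carrier G) =
         foldr end_series_mult (map (twisted_poincare G S \<rho>) Ds) end_series_one"
proof (intro ext)
  fix n x
  have subset: "\<And>D. D \<in> set Ds \<Longrightarrow> D \<subseteq> carrier G"
    using assms(3) by blast
  have "twisted_poincare G S \<rho> (carrier G) n x
      = (\<Sum>t\<in>{t\<in>listset Ds. sum_list (map (coxeter_length G S) t) = n}. foldr \<rho> t x)"
    using assms(1,2) subset assms(4-6) by (rule twisted_poincare_carrier_eq_sum_factorizations)
  also have "\<dots> = foldr end_series_mult (map (twisted_poincare G S \<rho>) Ds) end_series_one n x"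
    unfolding twisted_poincare_eq_graded_series
  proof (rule foldr_end_series_mult_graded_series[symmetric])
    show "\<rho> w (x + y) = \<rho> w x + \<rho> w y" if "D \<in> set Ds" "w \<in> D" for D w x y
      using assms(6) by (rule hecke_rep_additive) (use subset[OF that(1)] that(2) in blast)
    show "finite {w\<in>D. coxeter_length G S w \<le> m}" if "D \<in> set Ds" for D m
      using assms(1,2) subset[OF that] by (rule finite_coxeter_length_le)
  qed
  finally show "twisted_poincare G S \<rho> (carrier G) n x
      = foldr end_series_mult (map (twisted_poincare G S \<rho>) Ds) end_series_one n x" .
qed

end
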